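(* Let $\ell\ge2$ be an integer and $d=2^\ell-1$. Then the $d$-dimensional hypercube $Q_d$ has a spanning 2-connected subgraph $H$ with $\mathsf{tvc}(H)\le 2\,(2^{d-\ell}+2^{d/2-\ell})$.
   Context: $Q_d$ is the graph on $\{0,1\}^d$ in which two vectors are adjacent iff they differ in exactly one coordinate. A total vertex cover of a graph $H$ is a set $S\subseteq V(H)$ that is a vertex cover (every edge has an endpoint in $S$) and a total dominating set (every vertex of $H$, including those in $S$, has a neighbour in $S$); $\mathsf{tvc}(H)$ is the minimum size of a total vertex cover. *)

theory Defs
  imports Complex_Main
begin

text \<open>The hypercube Q_d: vertices are the 0/1-vectors of length d, encoded as
subsets of the coordinate set {0..<d} (the support of the vector); two vertices
are adjacent iff they differ in exactly one coordinate.\<close>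

definition cube_verts :: "nat \<Rightarrow> nat set set" where
  "cube_verts d = Pow {..<d}"

definition cube_edges :: "nat \<Rightarrow> nat set set set" where
  "cube_edges d = {{x, y} | x y. x \<in> cube_verts d \<and> y \<in> cube_verts d
                       \<and> card ((x - y) \<union> (y - x)) = 1}"

definition spanning_subgraph_of_cube :: "nat \<Rightarrow> nat set set \<Rightarrow> nat set set set \<Rightarrow> bool" where
  "spanning_subgraph_of_cube d V E \<longleftrightarrow> V = cube_verts d \<and> E \<subseteq> cube_edges d"

definition connected_on :: "'a set set \<Rightarrow> 'a set \<Rightarrow> bool" where
  "connected_on E W \<longleftrightarrow> W \<noteq> {} \<and>
     (\<forall>u\<in>W. \<forall>v\<in>W. (\<lambda>a b. {a, b} \<in> E \<and> a \<in> W \<and> b \<in> W)\<^sup>*\<^sup>* u v)"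

definition two_connected :: "'a set \<Rightarrow> 'a set set \<Rightarrow> bool" where
  "two_connected V E \<longleftrightarrow> finite V \<and> card V \<ge> 3 \<and> connected_on E V \<and>
     (\<forall>v\<in>V. connected_on E (V - {v}))"

definition is_tvc :: "'a set \<Rightarrow> 'a set set \<Rightarrow> 'a set \<Rightarrow> bool" where
  "is_tvc V E S \<longleftrightarrow> S \<subseteq> V \<and> (\<forall>e\<in>E. e \<inter> S \<noteq> {}) \<and>
     (\<forall>v\<in>V. \<exists>u\<in>S. {v, u} \<in> E \<and> u \<noteq> v)"

definition tvc :: "'a set \<Rightarrow> 'a set set \<Rightarrow> nat" where
  "tvc V E = (LEAST k. \<exists>S. is_tvc V E S \<and> card S = k)"

end

theory Submission
  imports Defs
begin

(*
  Let m = 2^k - 1, so that d = 2m + 1 and l = k + 1, and read a vertex of Q_d as a triple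
  (x, b, y) of x, y in Q_m and a middle bit b.  The Hamming code C of length m is perfect: the
  Hamming balls of radius 1 around its words partition Q_m.  Let S consist of all (x, b, y) with
  x + y in C, together with the set obtained recursively for Q_m (placed on the x-coordinates),
  and let H consist of all cube edges meeting S.  Every vertex has a neighbour in S (flip one
  coordinate of x if x + y is not a codeword, flip b otherwise), so S is a total vertex cover of H.
  The new part of S has 2^(m+1) |C| = 2^(d-l+1) elements, and the recursive remainder is a sum of
  lower-order terms bounded by (8/7) 2^(m-k) <= 2 * 2^(d/2 - l).

  H is 2-connected by induction on k.  After deleting a vertex z, each fibre x + y = u, u in C,
  stays connected through moves flipping b, or x_i and y_i together, all of whose endpoints lie
  in S.  Fibres over codewords near a common vertex of the recursive set are joined through
  that vertex, and the induction hypothesis (for the lower graph minus z) links all fibres.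
*)

section \<open>Flips and Hamming distance\<close>

definition flip :: "nat set \<Rightarrow> nat \<Rightarrow> nat set" where
  "flip A j = (if j \<in> A then A - {j} else insert j A)"

definition hamming_dist :: "nat set \<Rightarrow> nat set \<Rightarrow> nat" where
  "hamming_dist A B = card (sym_diff A B)"

lemma mem_flip [simp]: "x \<in> flip A j \<longleftrightarrow> (x = j) \<noteq> (x \<in> A)"
  by (auto simp: flip_def)

lemma flip_flip [simp]: "flip (flip A j) j = A"
  by auto

lemma flip_neq [simp]: "flip A j \<noteq> A" "A \<noteq> flip A j"
  by (auto simp: set_eq_iff)

lemma flip_eq_flip_iff [simp]: "flip A i = flip A j \<longleftrightarrow> i = j"
  by (auto simp: set_eq_iff)

lemma flip_commute: "flip (flip A i) j = flip (flip A j) i"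
  by auto

lemma flip_subset: "A \<subseteq> {..<n} \<Longrightarrow> j < n \<Longrightarrow> flip A j \<subseteq> {..<n}"
  by auto

lemma finite_flip [simp]: "finite (flip A j) = finite A"
  by (simp add: flip_def)

lemma odd_card_flip:
  assumes "finite A"
  shows "odd (card (flip A j)) \<longleftrightarrow> even (card A)"
proof (cases "j \<in> A")
  case True
  with assms have "card A = Suc (card (A - {j}))"
    by (rule card_Suc_Diff1[symmetric])
  with True show ?thesis
    by (simp add: flip_def)
qed (simp add: flip_def assms)

lemma flip_avoids:
  assumes "i \<noteq> j"
  obtains k where "k \<in> {i, j}" "flip A k \<noteq> z"
  using assms by (metis flip_eq_flip_iff insertCI)

lemma hamming_dist_commute: "hamming_dist A B = hamming_dist B A"
  by (simp add: hamming_dist_def Un_commute)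

lemma hamming_dist_self [simp]: "hamming_dist A A = 0"
  by (simp add: hamming_dist_def)

lemma hamming_dist_flip_self [simp]: "hamming_dist A (flip A j) = 1"
proof -
  have "sym_diff A (flip A j) = {j}"
    by auto
  then show ?thesis
    by (simp add: hamming_dist_def)
qed

lemma hamming_dist_triangle:
  assumes "finite A" "finite B" "finite C"
  shows "hamming_dist A C \<le> hamming_dist A B + hamming_dist B C"
proof -
  have "hamming_dist A C \<le> card (sym_diff A B \<union> sym_diff B C)"
    unfolding hamming_dist_def using assms by (intro card_mono) auto
  also have "\<dots> \<le> hamming_dist A B + hamming_dist B C"
    unfolding hamming_dist_def by (rule card_Un_le)
  finally show ?thesis .
qed

lemma hamming_dist_flip_less:
  assumes "finite A" "finite B" "j \<in> sym_diff A B"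
  shows "hamming_dist (flip A j) B < hamming_dist A B"
proof -
  have "sym_diff (flip A j) B = sym_diff A B - {j}"
    using assms(3) by auto
  moreover have "finite (sym_diff A B)"
    using assms(1,2) by simp
  ultimately show ?thesis
    unfolding hamming_dist_def using assms(3) by (simp only: card_Diff1_less)
qed

lemma hamming_dist_le_1E:
  assumes "hamming_dist A B \<le> 1" "finite A" "finite B"
  obtains "B = A" | j where "j \<in> sym_diff A B" "B = flip A j"
proof (cases "A = B")
  case False
  then have "sym_diff A B \<noteq> {}"
    by blast
  then have "card (sym_diff A B) \<noteq> 0"
    using assms(2,3) by simp
  with assms(1) have "card (sym_diff A B) = 1"
    by (simp add: hamming_dist_def)
  then obtain j where j: "sym_diff A B = {j}"
    by (auto simp: card_Suc_eq)
  then have "(x \<in> A) \<noteq> (x \<in> B) \<longleftrightarrow> x = j" for x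
    by blast
  then have "B = flip A j"
    by (intro set_eqI) (metis mem_flip)
  with j that show ?thesis
    by blast
qed (use that in blast)

lemma cube_edge_flip:
  assumes "A \<subseteq> {..<n}" "j < n"
  shows "{A, flip A j} \<in> cube_edges n"
  using assms flip_subset[OF assms] hamming_dist_flip_self[of A j]
  unfolding cube_edges_def cube_verts_def hamming_dist_def by blast

lemma hamming_dist_cube_edge: "{A, B} \<in> cube_edges n \<Longrightarrow> hamming_dist A B = 1"
  unfolding cube_edges_def hamming_dist_def by (auto simp: doubleton_eq_iff Un_commute)

section \<open>Splitting the vertices of the cube of dimension 2m + 1\<close>

(* A vertex A is the triple (x, b, y) with x = A \<inter> {..<m}, b = (m \<in> A) and y = high_half m A;
   halves_xor m A is x + y. *)

definition high_half :: "nat \<Rightarrow> nat set \<Rightarrow> nat set" where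
  "high_half m A = {i. i < m \<and> Suc (m + i) \<in> A}"

definition halves_xor :: "nat \<Rightarrow> nat set \<Rightarrow> nat set" where
  "halves_xor m A = {i. i < m \<and> (i \<in> A) \<noteq> (Suc (m + i) \<in> A)}"

definition xor_preimage :: "nat \<Rightarrow> nat set set \<Rightarrow> nat set set" where
  "xor_preimage m C = {A \<in> Pow {..<Suc (2 * m)}. halves_xor m A \<in> C}"

lemma halves_xor_flip_low: "j < m \<Longrightarrow> halves_xor m (flip A j) = flip (halves_xor m A) j"
  by (auto simp: halves_xor_def)

lemma halves_xor_flip_mid [simp]: "halves_xor m (flip A m) = halves_xor m A"
  by (auto simp: halves_xor_def)

lemma halves_xor_flip_high: "i < m \<Longrightarrow> halves_xor m (flip A (Suc (m + i))) = flip (halves_xor m A) i"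
  by (auto simp: halves_xor_def)

lemma high_half_flip_low: "j \<le> m \<Longrightarrow> high_half m (flip A j) = high_half m A"
  by (auto simp: high_half_def)

lemma high_half_flip_high: "i < m \<Longrightarrow> high_half m (flip A (Suc (m + i))) = flip (high_half m A) i"
  by (auto simp: high_half_def)

lemma halves_xor_subset: "halves_xor m A \<subseteq> {..<m}"
  by (auto simp: halves_xor_def)

lemma finite_halves_xor [simp]: "finite (halves_xor m A)"
  using halves_xor_subset finite_subset by blast

lemma finite_high_half [simp]: "finite (high_half m A)"
  by (simp add: high_half_def)

lemma halves_xor_low: "A \<subseteq> {..<m} \<Longrightarrow> halves_xor m A = A"
  by (auto simp: halves_xor_def)

lemma high_half_eq: "high_half m A = sym_diff (A \<inter> {..<m}) (halves_xor m A)"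
  by (auto simp: high_half_def halves_xor_def)

lemma halves_eqI:
  assumes "A \<subseteq> {..<Suc (2 * m)}" "B \<subseteq> {..<Suc (2 * m)}"
    and "A \<inter> {..<m} = B \<inter> {..<m}" "halves_xor m A = halves_xor m B" "m \<in> A \<longleftrightarrow> m \<in> B"
  shows "A = B"
proof (rule set_eqI)
  fix j
  consider "j \<le> m" | i where "i < m" "j = Suc (m + i)" | "Suc (2 * m) \<le> j"
  proof (cases "j \<le> m")
    case False
    then show ?thesis
      using that(2)[of "j - Suc m"] that(3) by (cases "j < Suc (2 * m)") auto
  qed (use that in blast)
  then show "j \<in> A \<longleftrightarrow> j \<in> B"
  proof cases
    case (2 i)
    then have "i \<in> A \<longleftrightarrow> i \<in> B" "i \<in> halves_xor m A \<longleftrightarrow> i \<in> halves_xor m B"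
      using assms(3,4) by auto
    with 2 show ?thesis
      by (auto simp: halves_xor_def)
  qed (use assms in \<open>auto simp: le_less\<close>)
qed

lemma hamming_dist_halves_xor_le:
  assumes "finite A" "finite B"
  shows "hamming_dist (halves_xor m A) (halves_xor m B) \<le> hamming_dist A B"
proof -
  define f where "f i = (if i \<in> sym_diff A B then i else Suc (m + i))" for i
  have "inj_on f (sym_diff (halves_xor m A) (halves_xor m B))"
  proof (rule inj_onI)
    fix a b
    assume "a \<in> sym_diff (halves_xor m A) (halves_xor m B)" "b \<in> sym_diff (halves_xor m A) (halves_xor m B)"
    then have "a < m" "b < m"
      using halves_xor_subset by blast+
    then show "f a = f b \<Longrightarrow> a = b"
      by (auto simp: f_def split: if_splits)
  qed
  moreover have "f a \<in> sym_diff A B" if "a \<in> sym_diff (halves_xor m A) (halves_xor m B)" for a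
  proof -
    have "(Suc (m + a) \<in> A) \<noteq> (Suc (m + a) \<in> B)" if "(a \<in> A) = (a \<in> B)"
      using that \<open>a \<in> sym_diff _ _\<close> unfolding halves_xor_def by blast
    then show ?thesis
      unfolding f_def by (cases "a \<in> sym_diff A B") auto
  qed
  ultimately show ?thesis
    unfolding hamming_dist_def using assms by (intro card_inj_on_le) auto
qed

definition pair_flip :: "nat \<Rightarrow> nat \<Rightarrow> nat set \<Rightarrow> nat set" where
  "pair_flip m i A = flip (flip A i) (Suc (m + i))"

lemma pair_flip_subset: "A \<subseteq> {..<Suc (2 * m)} \<Longrightarrow> i < m \<Longrightarrow> pair_flip m i A \<subseteq> {..<Suc (2 * m)}"
  unfolding pair_flip_def by (intro flip_subset) simp_all

lemma halves_xor_pair_flip: "i < m \<Longrightarrow> halves_xor m (pair_flip m i A) = halves_xor m A"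
  by (simp add: pair_flip_def halves_xor_flip_low halves_xor_flip_high)

lemma mid_mem_pair_flip: "i < m \<Longrightarrow> m \<in> pair_flip m i A \<longleftrightarrow> m \<in> A"
  by (simp add: pair_flip_def)

lemma low_mem_pair_flip: "i < m \<Longrightarrow> j < m \<Longrightarrow> j \<in> pair_flip m i A \<longleftrightarrow> (j = i) \<noteq> (j \<in> A)"
  by (simp add: pair_flip_def)

definition parity_checked :: "nat \<Rightarrow> nat set \<Rightarrow> bool" where
  "parity_checked m A \<longleftrightarrow> (m \<in> A \<longleftrightarrow> odd (card (high_half m A)))"

lemma parity_checked_flip_low: "j < m \<Longrightarrow> parity_checked m (flip A j) = parity_checked m A"
  by (simp add: parity_checked_def high_half_flip_low)

lemma parity_checked_flip_mid: "parity_checked m (flip A m) \<longleftrightarrow> \<not> parity_checked m A"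
  by (simp add: parity_checked_def high_half_flip_low)

lemma parity_checked_flip_high:
  "i < m \<Longrightarrow> parity_checked m (flip A (Suc (m + i))) \<longleftrightarrow> \<not> parity_checked m A"
  by (simp add: parity_checked_def high_half_flip_high odd_card_flip)

lemma parity_checked_pair_flip:
  "i < m \<Longrightarrow> parity_checked m (pair_flip m i A) \<longleftrightarrow> \<not> parity_checked m A"
  by (simp add: pair_flip_def parity_checked_flip_low parity_checked_flip_high)

lemma parity_checked_eqI:
  assumes A: "A \<subseteq> {..<Suc (2 * m)}" "parity_checked m A"
    and B: "B \<subseteq> {..<Suc (2 * m)}" "parity_checked m B"
    and xor_eq: "halves_xor m A = halves_xor m B" and dist: "hamming_dist A B \<le> 2"
  shows "A = B"
proof -
  have finite: "finite (sym_diff A B)"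
    using A(1) B(1) by (auto intro: finite_subset)
  have low_eq: "A \<inter> {..<m} = B \<inter> {..<m}"
  proof (rule ccontr)
    assume "A \<inter> {..<m} \<noteq> B \<inter> {..<m}"
    then obtain i where i: "i < m" "i \<in> sym_diff A B"
      by (auto simp: set_eq_iff)
    have "i \<in> halves_xor m A \<longleftrightarrow> i \<in> halves_xor m B"
      by (simp only: xor_eq)
    with i have "Suc (m + i) \<in> sym_diff A B"
      unfolding halves_xor_def by auto
    with i(2) have "{i, Suc (m + i)} \<subseteq> sym_diff A B"
      by (simp only: insert_subset empty_subsetI simp_thms)
    moreover have "card (sym_diff A B) \<le> card {i, Suc (m + i)}"
      using dist i(1) by (simp add: hamming_dist_def)
    ultimately have diff: "sym_diff A B = {i, Suc (m + i)}"
      using card_seteq[OF finite] by (metis (no_types, lifting))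
    then have differ: "(x \<in> A) \<noteq> (x \<in> B) \<longleftrightarrow> x = i \<or> x = Suc (m + i)" for x
      by blast
    have "x \<in> B \<longleftrightarrow> x \<in> pair_flip m i A" for x
      using differ[of x] i(1) unfolding pair_flip_def by (cases "x = i"; cases "x = Suc (m + i)") auto
    then have "B = pair_flip m i A"
      by blast
    then show False
      using A(2) B(2) parity_checked_pair_flip[OF i(1)] by simp
  qed
  have "high_half m A = high_half m B"
    using low_eq xor_eq by (simp add: high_half_eq)
  then show "A = B"
    using halves_eqI[OF A(1) B(1) low_eq xor_eq] A(2) B(2) by (simp add: parity_checked_def)
qed

section \<open>Perfect codes and Hamming codes\<close>

definition perfect_code :: "nat \<Rightarrow> nat set set \<Rightarrow> bool" where
  "perfect_code n C \<longleftrightarrow> C \<subseteq> Pow {..<n} \<and>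
     (\<forall>B \<subseteq> {..<n}. \<exists>c\<in>C. hamming_dist B c \<le> 1) \<and>
     (\<forall>c\<in>C. \<forall>c'\<in>C. hamming_dist c c' \<le> 2 \<longrightarrow> c = c')"

lemma exists_flip_halves_xor_mem:
  assumes "perfect_code m C" "A \<subseteq> {..<Suc (2 * m)}"
  shows "\<exists>j < Suc (2 * m). halves_xor m (flip A j) \<in> C"
proof -
  have C: "C \<subseteq> Pow {..<m}" and covering: "\<And>B. B \<subseteq> {..<m} \<Longrightarrow> \<exists>c\<in>C. hamming_dist B c \<le> 1"
    using assms(1) by (auto simp: perfect_code_def)
  obtain c where c: "c \<in> C" "hamming_dist (halves_xor m A) c \<le> 1"
    using covering[OF halves_xor_subset] by blast
  have "c \<subseteq> {..<m}"
    using c(1) C by blast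
  then have "finite c"
    by (rule finite_subset) simp
  with c(2) finite_halves_xor show ?thesis
  proof (cases rule: hamming_dist_le_1E)
    case 1
    then show ?thesis
      using c(1) by (intro exI[of _ m]) simp
  next
    case (2 j)
    have "j < m"
      using 2(1) \<open>c \<subseteq> {..<m}\<close> halves_xor_subset[of m A] by blast
    with 2 show ?thesis
      using c(1) by (intro exI[of _ j]) (simp add: halves_xor_flip_low)
  qed
qed

definition hamming_length :: "nat \<Rightarrow> nat" where
  "hamming_length k = 2 ^ k - 1"

lemma hamming_length_Suc: "hamming_length (Suc k) = Suc (2 * hamming_length k)"
  unfolding hamming_length_def by (induction k) auto

lemma le_hamming_length: "k \<le> hamming_length k"
  by (induction k) (simp_all add: hamming_length_Suc)

fun hamming_code :: "nat \<Rightarrow> nat set set" where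
  "hamming_code 0 = {{}}"
| "hamming_code (Suc k) =
     {A \<in> xor_preimage (hamming_length k) (hamming_code k). parity_checked (hamming_length k) A}"

lemma mem_hamming_code_Suc:
  assumes "m = hamming_length k"
  shows "A \<in> hamming_code (Suc k) \<longleftrightarrow>
    A \<subseteq> {..<Suc (2 * m)} \<and> halves_xor m A \<in> hamming_code k \<and> parity_checked m A"
  using assms by (simp add: xor_preimage_def)

lemma hamming_code_subset: "hamming_code k \<subseteq> Pow {..<hamming_length k}"
  by (cases k) (auto simp: xor_preimage_def hamming_length_Suc)

lemma empty_mem_hamming_code: "{} \<in> hamming_code k"
  by (induction k) (auto simp: xor_preimage_def halves_xor_def high_half_def parity_checked_def)

lemma hamming_code_subset_xor_preimage:
  "hamming_code k \<subseteq> xor_preimage (hamming_length k) (hamming_code k)"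
  using hamming_code_subset
  by (fastforce simp: xor_preimage_def halves_xor_low hamming_length_Suc)

lemma xor_preimage_diff_hamming_code:
  "xor_preimage (hamming_length k) (hamming_code k) - hamming_code (Suc k)
     \<subseteq> (\<lambda>A. flip A (hamming_length k)) ` hamming_code (Suc k)"
proof
  fix A
  assume A: "A \<in> xor_preimage (hamming_length k) (hamming_code k) - hamming_code (Suc k)"
  then have "flip A (hamming_length k) \<in> hamming_code (Suc k)"
    by (auto simp: xor_preimage_def parity_checked_flip_mid intro: flip_subset)
  then show "A \<in> (\<lambda>A. flip A (hamming_length k)) ` hamming_code (Suc k)"
    by (rule rev_image_eqI) simp
qed

lemma hamming_code_covering:
  "B \<subseteq> {..<hamming_length k} \<Longrightarrow> \<exists>c\<in>hamming_code k. hamming_dist B c \<le> 1"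
proof (induction k arbitrary: B)
  case 0
  then show ?case
    by (simp add: hamming_length_def)
next
  case (Suc k)
  define m where "m = hamming_length k"
  note mem = mem_hamming_code_Suc[OF m_def]
  have B: "B \<subseteq> {..<Suc (2 * m)}"
    using Suc.prems by (simp add: m_def hamming_length_Suc)
  have near: "\<exists>c\<in>hamming_code (Suc k). hamming_dist B c \<le> 1"
    if "A\<^sub>1 \<subseteq> {..<Suc (2 * m)}" "halves_xor m A\<^sub>1 \<in> hamming_code k" "hamming_dist B A\<^sub>1 \<le> 1"
      and "A\<^sub>2 \<subseteq> {..<Suc (2 * m)}" "halves_xor m A\<^sub>2 \<in> hamming_code k" "hamming_dist B A\<^sub>2 \<le> 1"
      and "parity_checked m A\<^sub>2 \<longleftrightarrow> \<not> parity_checked m A\<^sub>1"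
    for A\<^sub>1 A\<^sub>2
  proof (cases "parity_checked m A\<^sub>1")
    case True
    with that show ?thesis
      by (intro bexI[of _ A\<^sub>1]) (simp_all add: mem del: hamming_code.simps)
  next
    case False
    with that show ?thesis
      by (intro bexI[of _ A\<^sub>2]) (simp_all add: mem del: hamming_code.simps)
  qed
  obtain c where c: "c \<in> hamming_code k" "hamming_dist (halves_xor m B) c \<le> 1"
    using Suc.IH[of "halves_xor m B"] halves_xor_subset m_def by blast
  have "finite c"
    using c(1) hamming_code_subset finite_subset by blast
  with c(2) finite_halves_xor show ?case
  proof (cases rule: hamming_dist_le_1E)
    case 1
    with B c(1) show ?thesis
      by (intro near[of B "flip B m"]) (simp_all add: flip_subset parity_checked_flip_mid)
  next
    case (2 i)
    then have i: "i < m"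
      using c(1) hamming_code_subset halves_xor_subset m_def by blast
    with B c(1) 2 show ?thesis
      by (intro near[of "flip B i" "flip B (Suc (m + i))"])
        (simp_all add: flip_subset halves_xor_flip_low halves_xor_flip_high
          parity_checked_flip_low parity_checked_flip_high)
  qed
qed

lemma hamming_code_distance:
  "c \<in> hamming_code k \<Longrightarrow> c' \<in> hamming_code k \<Longrightarrow> hamming_dist c c' \<le> 2 \<Longrightarrow> c = c'"
proof (induction k arbitrary: c c')
  case (Suc k)
  define m where "m = hamming_length k"
  have c: "c \<subseteq> {..<Suc (2 * m)}" "halves_xor m c \<in> hamming_code k" "parity_checked m c"
    and c': "c' \<subseteq> {..<Suc (2 * m)}" "halves_xor m c' \<in> hamming_code k" "parity_checked m c'"
    using Suc.prems(1,2) mem_hamming_code_Suc[OF m_def] by auto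
  have "finite c" "finite c'"
    using c(1) c'(1) by (auto intro: finite_subset)
  then have "hamming_dist (halves_xor m c) (halves_xor m c') \<le> 2"
    using Suc.prems(3) by (rule order_trans[OF hamming_dist_halves_xor_le])
  then have "halves_xor m c = halves_xor m c'"
    by (rule Suc.IH[OF c(2) c'(2)])
  then show ?case
    by (rule parity_checked_eqI[OF c(1,3) c'(1,3) _ Suc.prems(3)])
qed simp

lemma perfect_code_hamming_code: "perfect_code (hamming_length k) (hamming_code k)"
  unfolding perfect_code_def
  using hamming_code_subset hamming_code_covering hamming_code_distance by blast

lemma card_hamming_code: "card (hamming_code k) \<le> 2 ^ (hamming_length k - k)"
proof (induction k)
  case 0
  then show ?case
    by simp
next
  case (Suc k)
  define m where "m = hamming_length k"
  note mem = mem_hamming_code_Suc[OF m_def]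
  define f where "f A = (A \<inter> {..<m}, halves_xor m A)" for A
  have "inj_on f (hamming_code (Suc k))"
  proof (rule inj_onI)
    fix A B
    assume "A \<in> hamming_code (Suc k)" "B \<in> hamming_code (Suc k)" and eq: "f A = f B"
    then have A: "A \<subseteq> {..<Suc (2 * m)}" "parity_checked m A"
      and B: "B \<subseteq> {..<Suc (2 * m)}" "parity_checked m B"
      unfolding mem by blast+
    have low: "A \<inter> {..<m} = B \<inter> {..<m}" and xor: "halves_xor m A = halves_xor m B"
      using eq by (simp_all add: f_def)
    then have "high_half m A = high_half m B"
      by (simp add: high_half_eq)
    with A(2) B(2) have "m \<in> A \<longleftrightarrow> m \<in> B"
      by (simp add: parity_checked_def)
    with A(1) B(1) low xor show "A = B"
      by (rule halves_eqI)
  qed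
  moreover have "f ` hamming_code (Suc k) \<subseteq> Pow {..<m} \<times> hamming_code k"
    using mem by (auto simp: f_def)
  moreover have "finite (Pow {..<m} \<times> hamming_code k)"
    using hamming_code_subset finite_subset by blast
  ultimately have "card (hamming_code (Suc k)) \<le> card (Pow {..<m} \<times> hamming_code k)"
    by (rule card_inj_on_le)
  also have "\<dots> \<le> 2 ^ m * 2 ^ (m - k)"
    using Suc.IH by (simp add: card_cartesian_product card_Pow m_def)
  also have "\<dots> = 2 ^ (hamming_length (Suc k) - Suc k)"
    using le_hamming_length[of k] by (simp add: hamming_length_Suc m_def flip: power_add)
  finally show ?case .
qed

section \<open>Walks and total vertex covers\<close>

definition touching_edges :: "nat \<Rightarrow> nat set set \<Rightarrow> nat set set set" where
  "touching_edges n S = {e \<in> cube_edges n. e \<inter> S \<noteq> {}}"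

abbreviation walk_in :: "'a set set \<Rightarrow> 'a set \<Rightarrow> 'a \<Rightarrow> 'a \<Rightarrow> bool" where
  "walk_in E W \<equiv> (\<lambda>a b. {a, b} \<in> E \<and> a \<in> W \<and> b \<in> W)\<^sup>*\<^sup>*"

lemma walk_in_edge: "{a, b} \<in> E \<Longrightarrow> a \<in> W \<Longrightarrow> b \<in> W \<Longrightarrow> walk_in E W a b"
  by (simp add: r_into_rtranclp)

lemma walk_in_sym: "walk_in E W a b \<Longrightarrow> walk_in E W b a"
proof (induction rule: rtranclp_induct)
  case (step b c)
  then have "{c, b} \<in> E \<and> c \<in> W \<and> b \<in> W"
    by (simp add: insert_commute)
  with step.IH show ?case
    by (rule converse_rtranclp_into_rtranclp[rotated])
qed simp

lemma connected_onI_hub: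
  assumes "w \<in> W" "\<And>a. a \<in> W \<Longrightarrow> walk_in E W a w"
  shows "connected_on E W"
  unfolding connected_on_def
proof (intro conjI ballI)
  fix a b
  assume "a \<in> W" "b \<in> W"
  then have "walk_in E W a w" "walk_in E W w b"
    using assms(2) walk_in_sym[OF assms(2)] by simp_all
  then show "walk_in E W a b"
    by (rule rtranclp_trans)
qed (use assms(1) in blast)

lemma two_connected_cubeI:
  assumes "2 \<le> n" "\<And>z. connected_on E (Pow {..<n} - {z})"
  shows "two_connected (cube_verts n) E"
proof -
  have "(2::nat) ^ 2 \<le> 2 ^ n"
    using assms(1) by (rule power_increasing) simp
  then have "3 \<le> card (cube_verts n)"
    by (simp add: cube_verts_def card_Pow)
  moreover have "Pow {..<n} - {{n}} = cube_verts n" \<comment> \<open>{n} is not a vertex\<close>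
    by (auto simp: cube_verts_def)
  ultimately show ?thesis
    unfolding two_connected_def using assms(2)[of "{n}"] assms(2)
    by (simp add: cube_verts_def)
qed

lemma tvc_touching_edges_le:
  assumes "S \<subseteq> Pow {..<n}" "\<And>A. A \<subseteq> {..<n} \<Longrightarrow> \<exists>j<n. flip A j \<in> S"
  shows "tvc (cube_verts n) (touching_edges n S) \<le> card S"
proof -
  have "\<exists>u\<in>S. {A, u} \<in> touching_edges n S \<and> u \<noteq> A" if A: "A \<subseteq> {..<n}" for A
  proof -
    obtain j where "j < n" "flip A j \<in> S"
      using assms(2)[OF A] by blast
    then show ?thesis
      using cube_edge_flip[OF A] by (intro bexI[of _ "flip A j"]) (auto simp: touching_edges_def)
  qed
  then have "is_tvc (cube_verts n) (touching_edges n S) S"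
    unfolding is_tvc_def cube_verts_def
    using assms(1) by (simp add: touching_edges_def)
  then show ?thesis
    unfolding tvc_def by (blast intro: Least_le)
qed

section \<open>Connectivity of the doubled graph\<close>

(* z need not be a vertex of the smaller cube; then connected_below is plain connectivity. *)
locale cube_doubling =
  fixes m :: nat and C S :: "nat set set" and z :: "nat set"
  assumes pos: "0 < m"
    and perfect: "perfect_code m C"
    and S_subset: "S \<subseteq> Pow {..<m}"
    and connected_below: "connected_on (touching_edges m S) (Pow {..<m} - {z})"
begin

abbreviation "S' \<equiv> xor_preimage m C \<union> S"
abbreviation "W \<equiv> Pow {..<Suc (2 * m)} - {z}"
abbreviation "joined \<equiv> walk_in (touching_edges (Suc (2 * m)) S') W"

lemma C_subset: "C \<subseteq> Pow {..<m}"
  and covering: "B \<subseteq> {..<m} \<Longrightarrow> \<exists>c\<in>C. hamming_dist B c \<le> 1"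
  and distance: "c \<in> C \<Longrightarrow> c' \<in> C \<Longrightarrow> hamming_dist c c' \<le> 2 \<Longrightarrow> c = c'"
  using perfect unfolding perfect_code_def by blast+

lemma finite_mem_C: "c \<in> C \<Longrightarrow> finite c"
  using C_subset finite_subset by blast

lemma mem_S'I: "A \<subseteq> {..<Suc (2 * m)} \<Longrightarrow> halves_xor m A \<in> C \<Longrightarrow> A \<in> S'"
  by (simp add: xor_preimage_def)

lemma joined_flip:
  assumes "A \<in> W" "flip A j \<in> W" "j < Suc (2 * m)" "A \<in> S' \<or> flip A j \<in> S'"
  shows "joined A (flip A j)"
proof (rule walk_in_edge)
  show "{A, flip A j} \<in> touching_edges (Suc (2 * m)) S'"
    using cube_edge_flip[of A "Suc (2 * m)" j] assms by (auto simp: touching_edges_def)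
qed (use assms in simp_all)

lemma joined_two_flips:
  assumes "i \<noteq> j" "i < Suc (2 * m)" "j < Suc (2 * m)"
    and "A \<in> W" "A \<in> S'" "flip (flip A i) j \<in> W" "flip (flip A i) j \<in> S'"
  shows "joined A (flip (flip A i) j)"
proof -
  have via: "joined A (flip (flip A i) j)"
    if "k < Suc (2 * m)" "k' < Suc (2 * m)" "flip A k \<noteq> z" "flip (flip A k) k' = flip (flip A i) j"
    for k k'
  proof -
    have "flip A k \<in> W"
      using assms(4) that(1,3) flip_subset by simp
    with assms(4,5) that(1) have "joined A (flip A k)"
      by (intro joined_flip) simp_all
    moreover have "joined (flip A k) (flip (flip A k) k')"
      using \<open>flip A k \<in> W\<close> assms(6,7) that(2,4) by (intro joined_flip) simp_all
    ultimately show ?thesis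
      unfolding that(4) by (rule rtranclp_trans)
  qed
  obtain k where "k \<in> {i, j}" "flip A k \<noteq> z"
    using flip_avoids[OF assms(1)] by blast
  then show ?thesis
    using via[of i j] via[of j i] assms(2,3) flip_commute[of A j i] by auto
qed

(* The vertex (0, b, u) over u, with b chosen to avoid z. *)
definition hub :: "nat set \<Rightarrow> nat set" where
  "hub u = (let v = (\<lambda>i. Suc (m + i)) ` u in if v = z then insert m v else v)"

lemma hub_neq: "hub u \<noteq> z"
proof -
  have "m \<notin> (\<lambda>i. Suc (m + i)) ` u"
    by auto
  then show ?thesis
    unfolding hub_def Let_def by (metis insertI1)
qed

lemma hub_subset: "u \<subseteq> {..<m} \<Longrightarrow> hub u \<subseteq> {..<Suc (2 * m)}"
  by (auto simp: hub_def Let_def)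

lemma hub_mem_W: "u \<subseteq> {..<m} \<Longrightarrow> hub u \<in> W"
  using hub_subset hub_neq by simp

lemma hub_low: "hub u \<inter> {..<m} = {}"
  by (auto simp: hub_def Let_def)

lemma mem_hub_high: "Suc (m + i) \<in> hub u \<longleftrightarrow> i \<in> u"
  by (auto simp: hub_def Let_def)

lemma halves_xor_hub:
  assumes "u \<subseteq> {..<m}"
  shows "halves_xor m (hub u) = u"
proof -
  have "i \<notin> hub u" if "i < m" for i
    using hub_low that by blast
  then show ?thesis
    using assms by (auto simp: halves_xor_def mem_hub_high)
qed

lemma eq_hubI:
  assumes "u \<subseteq> {..<m}" "A \<subseteq> {..<Suc (2 * m)}" "A \<inter> {..<m} = {}" "halves_xor m A = u"
    and "m \<in> A \<longleftrightarrow> m \<in> hub u"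
  shows "A = hub u"
  by (rule halves_eqI[OF assms(2) hub_subset[OF assms(1)]])
    (simp_all add: assms hub_low halves_xor_hub)

lemma flip_mid_eq_hub:
  assumes "u \<subseteq> {..<m}" "A \<subseteq> {..<Suc (2 * m)}" "A \<inter> {..<m} = {}" "halves_xor m A = u"
    and "\<not> (m \<in> A \<longleftrightarrow> m \<in> hub u)"
  shows "flip A m = hub u"
proof (rule eq_hubI[OF assms(1)])
  show "flip A m \<inter> {..<m} = {}"
    using assms(3) by fastforce
qed (use assms flip_subset in simp_all)

lemma pair_flip_eq_hub:
  assumes "u \<subseteq> {..<m}" "A \<subseteq> {..<Suc (2 * m)}" "i < m" "A \<inter> {..<m} = {i}" "halves_xor m A = u"
    and "m \<in> A \<longleftrightarrow> m \<in> hub u"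
  shows "pair_flip m i A = hub u"
proof (rule eq_hubI[OF assms(1)])
  have "j \<in> A \<longleftrightarrow> j = i" if "j < m" for j
    using assms(4) that by blast
  then show "pair_flip m i A \<inter> {..<m} = {}"
    using assms(3) low_mem_pair_flip by fastforce
qed (use assms pair_flip_subset halves_xor_pair_flip mid_mem_pair_flip in simp_all)

lemma hamming_dist_pair_flip_hub_less:
  assumes "u \<subseteq> {..<m}" "A \<subseteq> {..<Suc (2 * m)}" "halves_xor m A = u" "i \<in> A" "i < m"
  shows "hamming_dist (pair_flip m i A) (hub u) < hamming_dist A (hub u)"
proof -
  have fin: "finite A" "finite (hub u)"
    using finite_subset[OF assms(2)] finite_subset[OF hub_subset[OF assms(1)]] by simp_all
  have "i \<in> sym_diff A (hub u)"
    using assms(4,5) hub_low by blast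
  then have "hamming_dist (flip A i) (hub u) < hamming_dist A (hub u)"
    by (rule hamming_dist_flip_less[OF fin])
  moreover have "i \<in> u \<longleftrightarrow> Suc (m + i) \<notin> A"
    using assms(4,5) by (simp add: assms(3)[symmetric] halves_xor_def)
  then have "Suc (m + i) \<in> sym_diff (flip A i) (hub u)"
    by (simp add: mem_hub_high)
  then have "hamming_dist (pair_flip m i A) (hub u) < hamming_dist (flip A i) (hub u)"
    unfolding pair_flip_def using fin by (intro hamming_dist_flip_less) simp_all
  ultimately show ?thesis
    by linarith
qed

lemma exists_pair_flip_avoiding:
  assumes A: "A \<in> W" "halves_xor m A = u" "A \<noteq> hub u" and u: "u \<subseteq> {..<m}"
    and mid: "(m \<in> A \<longleftrightarrow> m \<in> hub u) \<or> flip A m = z"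
  shows "\<exists>i\<in>A \<inter> {..<m}. pair_flip m i A \<noteq> z"
proof (rule ccontr)
  assume "\<not> (\<exists>i\<in>A \<inter> {..<m}. pair_flip m i A \<noteq> z)"
  then have hits_z: "pair_flip m i A = z" if "i \<in> A" "i < m" for i
    using that by blast
  have As: "A \<subseteq> {..<Suc (2 * m)}"
    using A(1) by blast
  show False
  proof (cases "A \<inter> {..<m} = {}")
    case True
    then have "\<not> (m \<in> A \<longleftrightarrow> m \<in> hub u)"
      using eq_hubI[OF u As True A(2)] A(3) by blast
    then show False
      using flip_mid_eq_hub[OF u As True A(2)] mid hub_neq by metis
  next
    case False
    then obtain i where i: "i \<in> A" "i < m"
      by blast
    have single: "A \<inter> {..<m} = {i}"
    proof (rule ccontr)
      assume "A \<inter> {..<m} \<noteq> {i}"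
      then obtain i' where "i' \<in> A" "i' < m" "i' \<noteq> i"
        using i by blast
      then have "(i \<in> pair_flip m i' A) \<noteq> (i \<in> pair_flip m i A)"
        using i by (simp add: low_mem_pair_flip)
      then show False
        using hits_z i \<open>i' \<in> A\<close> \<open>i' < m\<close> by metis
    qed
    show False
    proof (cases "m \<in> A \<longleftrightarrow> m \<in> hub u")
      case True
      then show False
        using pair_flip_eq_hub[OF u As i(2) single A(2)] hits_z[OF i] hub_neq by metis
    next
      case False
      then have "flip A m = pair_flip m i A"
        using mid hits_z[OF i] by simp
      then show False
        using mid_mem_pair_flip[OF i(2), of A] by (metis mem_flip)
    qed
  qed
qed

lemma fiber_step:
  assumes A: "A \<in> W" "halves_xor m A = u" "A \<noteq> hub u" and u: "u \<in> C"
  obtains A' where "A' \<in> W" "halves_xor m A' = u" "joined A A'"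
    "hamming_dist A' (hub u) < hamming_dist A (hub u)"
proof -
  have us: "u \<subseteq> {..<m}"
    using u C_subset by blast
  have As: "A \<subseteq> {..<Suc (2 * m)}"
    using A(1) by blast
  have AS: "A \<in> S'"
    using mem_S'I[OF As] A(2) u by simp
  show ?thesis
  proof (cases "(m \<in> A \<longleftrightarrow> m \<in> hub u) \<or> flip A m = z")
    case False
    then have "m \<in> sym_diff A (hub u)" "flip A m \<in> W"
      using flip_subset[OF As, of m] by auto
    moreover have "finite A" "finite (hub u)"
      using finite_subset[OF As] finite_subset[OF hub_subset[OF us]] by simp_all
    ultimately have "hamming_dist (flip A m) (hub u) < hamming_dist A (hub u)"
      using hamming_dist_flip_less by blast
    moreover have "joined A (flip A m)"
      using A(1) AS \<open>flip A m \<in> W\<close> by (intro joined_flip) simp_all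
    ultimately show ?thesis
      using A(2) \<open>flip A m \<in> W\<close> by (intro that[of "flip A m"]) simp_all
  next
    case True
    then obtain i where i: "i \<in> A" "i < m" "pair_flip m i A \<noteq> z"
      using exists_pair_flip_avoiding[OF A(1,2,3) us] by blast
    have "pair_flip m i A \<subseteq> {..<Suc (2 * m)}"
      by (rule pair_flip_subset[OF As i(2)])
    with i(3) A(2) u have "pair_flip m i A \<in> W" "pair_flip m i A \<in> S'"
      "halves_xor m (pair_flip m i A) = u"
      using mem_S'I halves_xor_pair_flip[OF i(2)] by simp_all
    moreover from this(1,2) have "joined A (pair_flip m i A)"
      unfolding pair_flip_def using i(2) by (intro joined_two_flips[OF _ _ _ A(1) AS]) simp_all
    ultimately show ?thesis
      using hamming_dist_pair_flip_hub_less[OF us As A(2) i(1,2)] by (intro that) simp_all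
  qed
qed

lemma joined_hub: "A \<in> W \<Longrightarrow> u \<in> C \<Longrightarrow> halves_xor m A = u \<Longrightarrow> joined A (hub u)"
proof (induction "hamming_dist A (hub u)" arbitrary: A rule: less_induct)
  case less
  show ?case
  proof (cases "A = hub u")
    case False
    obtain A' where A': "A' \<in> W" "halves_xor m A' = u" "joined A A'"
      "hamming_dist A' (hub u) < hamming_dist A (hub u)"
      by (rule fiber_step[OF less.prems(1,3) False less.prems(2)])
    have "joined A' (hub u)"
      using less.hyps[OF A'(4) A'(1) less.prems(2) A'(2)] .
    with A'(3) show ?thesis
      by (rule rtranclp_trans)
  qed simp
qed

lemma joined_flip_halves_xor:
  assumes "A \<in> W" "i < m" "A \<in> S' \<or> flip (halves_xor m A) i \<in> C"
  obtains A' where "A' \<in> W" "halves_xor m A' = flip (halves_xor m A) i" "joined A A'"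
proof -
  obtain k where k: "k \<in> {i, Suc (m + i)}" "flip A k \<noteq> z"
    by (rule flip_avoids[of i "Suc (m + i)"]) simp_all
  have "k < Suc (2 * m)"
    using k(1) assms(2) by auto
  then have "flip A k \<subseteq> {..<Suc (2 * m)}"
    using assms(1) flip_subset by simp
  moreover have xor_k: "halves_xor m (flip A k) = flip (halves_xor m A) i"
    using k(1) assms(2) by (auto simp: halves_xor_flip_low halves_xor_flip_high)
  ultimately have "A \<in> S' \<or> flip A k \<in> S'"
    using assms(3) mem_S'I[of "flip A k"] by argo
  moreover have "flip A k \<in> W"
    using \<open>flip A k \<subseteq> _\<close> k(2) by simp
  ultimately have "joined A (flip A k)"
    using assms(1) \<open>k < _\<close> by (intro joined_flip)
  with \<open>flip A k \<in> W\<close> xor_k show ?thesis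
    by (rule that)
qed

lemma joined_hub_near:
  assumes A: "A \<in> W" and u: "u \<in> C" "hamming_dist (halves_xor m A) u \<le> 1"
  shows "joined A (hub u)"
proof -
  from u(2) finite_halves_xor finite_mem_C[OF u(1)] show ?thesis
  proof (cases rule: hamming_dist_le_1E)
    case 1
    then show ?thesis
      using joined_hub[OF A u(1)] by simp
  next
    case (2 i)
    then have "i < m"
      using C_subset u(1) halves_xor_subset by blast
    moreover have "flip (halves_xor m A) i \<in> C"
      using 2(2) u(1) by simp
    ultimately obtain A' where A': "A' \<in> W" "halves_xor m A' = flip (halves_xor m A) i" "joined A A'"
      using joined_flip_halves_xor[OF A] by blast
    from A'(3) show ?thesis
      using joined_hub[OF A'(1) u(1)] A'(2) 2(2) by (simp add: rtranclp_trans)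
  qed
qed

lemma joined_hub_from_S:
  assumes q: "q \<in> S" "q \<noteq> z" and u: "u \<in> C" "hamming_dist q u \<le> 2"
  shows "joined q (hub u)"
proof -
  have qs: "q \<subseteq> {..<m}"
    using S_subset q(1) by blast
  then have qW: "q \<in> W" and xor_q: "halves_xor m q = q"
    using q(2) halves_xor_low by auto
  show ?thesis
  proof (cases "q = u")
    case True
    then show ?thesis
      using joined_hub[OF qW u(1)] xor_q by simp
  next
    case False
    then obtain j where j: "j \<in> sym_diff q u"
      by blast
    then have "j < m"
      using qs C_subset u(1) by blast
    moreover have "q \<in> S'"
      using q(1) by simp
    ultimately obtain A' where A': "A' \<in> W" "halves_xor m A' = flip (halves_xor m q) j" "joined q A'"
      using joined_flip_halves_xor[OF qW] by blast
    have "hamming_dist (flip q j) u < hamming_dist q u"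
      using finite_subset[OF qs] finite_mem_C[OF u(1)] j by (intro hamming_dist_flip_less) simp_all
    with u(2) A'(2) xor_q have "hamming_dist (halves_xor m A') u \<le> 1"
      by simp
    then have "joined A' (hub u)"
      by (rule joined_hub_near[OF A'(1) u(1)])
    with A'(3) show ?thesis
      by (rule rtranclp_trans)
  qed
qed

lemma joined_hubs_edge:
  assumes "{B, B'} \<in> touching_edges m S" "B \<subseteq> {..<m}" "B' \<subseteq> {..<m}"
    and "c \<in> C" "c' \<in> C" "hamming_dist B c \<le> 1" "hamming_dist B' c' \<le> 1"
    and "B \<noteq> z" "B' \<noteq> z"
  shows "joined (hub c) (hub c')"
proof -
  have fin: "finite B" "finite B'" "finite c" "finite c'"
    using assms(2-5) finite_mem_C finite_subset by blast+
  have edge: "hamming_dist B B' = 1"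
    using assms(1) hamming_dist_cube_edge[of B B' m] by (simp add: touching_edges_def)
  have "hamming_dist B c' \<le> 2"
    using hamming_dist_triangle[OF fin(1,2,4)] edge assms(7) by simp
  moreover have "hamming_dist B' c \<le> 2"
    using hamming_dist_triangle[OF fin(2,1,3)] edge assms(6) hamming_dist_commute[of B B'] by simp
  moreover have "B \<in> S \<or> B' \<in> S"
    using assms(1) by (auto simp: touching_edges_def)
  ultimately obtain q where q: "q \<in> S" "q \<noteq> z" "hamming_dist q c \<le> 2" "hamming_dist q c' \<le> 2"
    using assms(6-9) by fastforce
  have "joined (hub c) q"
    by (rule walk_in_sym[OF joined_hub_from_S[OF q(1,2) assms(4) q(3)]])
  also have "joined q (hub c')"
    by (rule joined_hub_from_S[OF q(1,2) assms(5) q(4)])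
  finally show ?thesis .
qed

lemma joined_hubs_walk:
  assumes "walk_in (touching_edges m S) (Pow {..<m} - {z}) B B'"
    and "B \<subseteq> {..<m}" "c \<in> C" "hamming_dist B c \<le> 1"
  shows "c' \<in> C \<Longrightarrow> hamming_dist B' c' \<le> 1 \<Longrightarrow> joined (hub c) (hub c')"
  using assms(1)
proof (induction arbitrary: c' rule: rtranclp_induct)
  case base
  have "finite B" "finite c" "finite c'"
    using assms(2,3) base(1) finite_mem_C finite_subset by blast+
  then have "hamming_dist c c' \<le> 2"
    using hamming_dist_triangle[of c B c'] assms(4) base(2) hamming_dist_commute[of c B] by simp
  then show ?case
    using distance[OF assms(3) base(1)] by simp
next
  case (step y w)
  then have "y \<subseteq> {..<m}" "y \<noteq> z"
    by simp_all
  then obtain c1 where c1: "c1 \<in> C" "hamming_dist y c1 \<le> 1"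
    using covering by blast
  have "joined (hub c) (hub c1)"
    by (rule step.IH[OF c1])
  moreover have "joined (hub c1) (hub c')"
    using step.hyps(2) step.prems c1 \<open>y \<subseteq> _\<close> \<open>y \<noteq> z\<close>
    by (intro joined_hubs_edge[of y w]) simp_all
  ultimately show ?case
    by (rule rtranclp_trans)
qed

theorem connected_on_doubled: "connected_on (touching_edges (Suc (2 * m)) S') W"
proof -
  obtain B0 where B0: "B0 \<subseteq> {..<m}" "B0 \<noteq> z"
    using connected_below unfolding connected_on_def by blast
  obtain c0 where c0: "c0 \<in> C" "hamming_dist B0 c0 \<le> 1"
    using covering[OF B0(1)] by blast
  have "joined A (hub c0)" if A: "A \<in> W" for A
  proof -
    obtain c where c: "c \<in> C" "hamming_dist (halves_xor m A) c \<le> 1"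
      using covering[OF halves_xor_subset] by blast
    have cs: "c \<subseteq> {..<m}"
      using c(1) C_subset by blast
    obtain B where B: "B \<subseteq> {..<m}" "B \<noteq> z" "hamming_dist B c \<le> 1"
    proof (cases "c = z")
      case True
      then show ?thesis
        using that[of "flip c 0"] flip_subset[OF cs pos] hamming_dist_flip_self[of c 0]
        by (simp add: hamming_dist_commute)
    qed (use that cs in simp)
    have "walk_in (touching_edges m S) (Pow {..<m} - {z}) B B0"
      using connected_below B B0 unfolding connected_on_def by blast
    then have "joined (hub c) (hub c0)"
      by (rule joined_hubs_walk[OF _ B(1) c(1) B(3) c0])
    with joined_hub_near[OF A c] show ?thesis
      by (rule rtranclp_trans)
  qed
  moreover have "hub c0 \<in> W"
    using hub_mem_W c0(1) C_subset by blast
  ultimately show ?thesis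
    by (intro connected_onI_hub[of "hub c0"])
qed

end

(* At k = 1 one vertex covers the single edge; the recurrence would take both. *)
fun tvc_set :: "nat \<Rightarrow> nat set set" where
  "tvc_set 0 = {{}}"
| "tvc_set (Suc k) =
     (if k = 0 then {{}} else xor_preimage (hamming_length k) (hamming_code k) \<union> tvc_set k)"

lemma tvc_set_subset: "tvc_set k \<subseteq> Pow {..<hamming_length k}"
proof (induction k)
  case (Suc k)
  have "Pow {..<hamming_length k} \<subseteq> Pow {..<hamming_length (Suc k)}"
    by (auto simp: hamming_length_Suc)
  with Suc.IH show ?case
    by (auto simp: xor_preimage_def hamming_length_Suc)
qed simp

lemma finite_tvc_set: "finite (tvc_set k)"
  using tvc_set_subset finite_subset by (metis finite_Pow_iff finite_lessThan)

lemma connected_tvc_set: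
  "1 \<le> k \<Longrightarrow> connected_on (touching_edges (hamming_length k) (tvc_set k)) (Pow {..<hamming_length k} - {z})"
proof (induction k arbitrary: z rule: dec_induct)
  case base
  have cube: "Pow {..<hamming_length 1} = {{}, {0}}"
    by (auto simp: hamming_length_def Pow_insert lessThan_Suc)
  have "{{}, flip {} 0} \<in> cube_edges 1"
    by (rule cube_edge_flip) simp_all
  then have edge: "{{}, {0}} \<in> touching_edges (hamming_length 1) (tvc_set 1)"
    by (simp add: touching_edges_def hamming_length_def flip_def)
  obtain w where "w \<in> {{}, {0::nat}} - {z}"
    by blast
  moreover have "walk_in (touching_edges (hamming_length 1) (tvc_set 1)) ({{}, {0}} - {z}) a w"
    if "a \<in> {{}, {0::nat}} - {z}" "w \<in> {{}, {0}} - {z}" for a w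
    using that edge walk_in_edge[of a w] by (auto simp: insert_commute)
  ultimately show ?case
    unfolding cube by (intro connected_onI_hub)
next
  case (step k)
  interpret cube_doubling "hamming_length k" "hamming_code k" "tvc_set k" z
  proof
    show "0 < hamming_length k"
      using step.hyps le_hamming_length[of k] by simp
  qed (simp_all add: perfect_code_hamming_code tvc_set_subset step.IH)
  show ?case
    using connected_on_doubled step.hyps by (simp add: hamming_length_Suc)
qed

lemma tvc_set_dominating:
  assumes "1 \<le> k" "A \<subseteq> {..<hamming_length (Suc k)}"
  shows "\<exists>j < hamming_length (Suc k). flip A j \<in> tvc_set (Suc k)"
proof -
  obtain j where "j < hamming_length (Suc k)"
    "halves_xor (hamming_length k) (flip A j) \<in> hamming_code k"
    using exists_flip_halves_xor_mem[OF perfect_code_hamming_code, of A k] assms(2)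
    by (auto simp: hamming_length_Suc)
  moreover have "flip A j \<subseteq> {..<hamming_length (Suc k)}"
    using assms(2) calculation(1) by (rule flip_subset)
  ultimately show ?thesis
    using assms(1) by (intro exI[of _ j]) (simp add: xor_preimage_def hamming_length_Suc)
qed

lemma card_xor_preimage_diff_hamming_code:
  "card (xor_preimage (hamming_length k) (hamming_code k) - hamming_code (Suc k))
     \<le> card (hamming_code (Suc k))"
proof -
  have "finite (hamming_code (Suc k))"
    using hamming_code_subset finite_subset by blast
  then have "finite ((\<lambda>A. flip A (hamming_length k)) ` hamming_code (Suc k))"
    by simp
  then have "card (xor_preimage (hamming_length k) (hamming_code k) - hamming_code (Suc k))
      \<le> card ((\<lambda>A. flip A (hamming_length k)) ` hamming_code (Suc k))"
    using xor_preimage_diff_hamming_code by (rule card_mono)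
  also have "\<dots> \<le> card (hamming_code (Suc k))"
    by (rule card_image_le) fact
  finally show ?thesis .
qed

lemma card_tvc_set_Suc:
  assumes "1 \<le> k"
  shows "card (tvc_set (Suc k)) \<le> 2 * 2 ^ (hamming_length (Suc k) - Suc k) + card (tvc_set k - hamming_code k)"
    and "card (tvc_set (Suc k) - hamming_code (Suc k))
      \<le> 2 ^ (hamming_length (Suc k) - Suc k) + card (tvc_set k - hamming_code k)"
proof -
  let ?P = "xor_preimage (hamming_length k) (hamming_code k)"
  let ?N = "hamming_code (Suc k)"
  have fin: "finite (?P - ?N)" "finite ?N" "finite (tvc_set k - hamming_code k)"
    using finite_subset[OF hamming_code_subset] finite_tvc_set
    by (auto simp: xor_preimage_def)
  have split: "tvc_set (Suc k) \<subseteq> ?N \<union> ((?P - ?N) \<union> (tvc_set k - hamming_code k))"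
    "tvc_set (Suc k) - ?N \<subseteq> (?P - ?N) \<union> (tvc_set k - hamming_code k)"
    using assms hamming_code_subset_xor_preimage[of k] by auto
  have card_N: "card ?N \<le> 2 ^ (hamming_length (Suc k) - Suc k)"
    by (rule card_hamming_code)
  have "card (tvc_set (Suc k)) \<le> card ?N + (card (?P - ?N) + card (tvc_set k - hamming_code k))"
    using card_mono[OF _ split(1)] card_Un_le[of ?N] card_Un_le[of "?P - ?N"] fin
    by (meson add_left_mono finite_UnI order_trans)
  then show "card (tvc_set (Suc k)) \<le> 2 * 2 ^ (hamming_length (Suc k) - Suc k) + card (tvc_set k - hamming_code k)"
    using card_xor_preimage_diff_hamming_code[of k] card_N by linarith
  have "card (tvc_set (Suc k) - ?N) \<le> card (?P - ?N) + card (tvc_set k - hamming_code k)"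
    using card_mono[OF _ split(2)] card_Un_le[of "?P - ?N"] fin by (meson finite_UnI order_trans)
  then show "card (tvc_set (Suc k) - ?N) \<le> 2 ^ (hamming_length (Suc k) - Suc k) + card (tvc_set k - hamming_code k)"
    using card_xor_preimage_diff_hamming_code[of k] card_N by linarith
qed

lemma card_tvc_set_diff_hamming_code:
  "1 \<le> k \<Longrightarrow> 7 * card (tvc_set k - hamming_code k) \<le> 8 * 2 ^ (hamming_length k - k)"
proof (induction k rule: dec_induct)
  case base
  then show ?case
    using empty_mem_hamming_code[of 1] by simp
next
  case (step k)
  have "7 * card (tvc_set k - hamming_code k) \<le> 2 ^ (hamming_length (Suc k) - Suc k)"
  proof (cases "k = 1")
    case True
    then show ?thesis
      using empty_mem_hamming_code[of 1] by simp
  next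
    case False
    then have "2 \<le> k"
      using step.hyps by simp
    then have "(2::nat) ^ 2 \<le> 2 ^ k"
      by (rule power_increasing) simp
    then have "3 + (hamming_length k - k) \<le> hamming_length (Suc k) - Suc k"
      using le_hamming_length[of k] by (simp add: hamming_length_Suc hamming_length_def)
    then have "(8::nat) * 2 ^ (hamming_length k - k) \<le> 2 ^ (hamming_length (Suc k) - Suc k)"
      using power_increasing[of _ _ "2::nat"] by (fastforce simp: power_add)
    with step.IH show ?thesis
      by linarith
  qed
  then show ?case
    using card_tvc_set_Suc(2)[OF step.hyps(1)] by linarith
qed

lemma eight_sevenths_le_powr:
  assumes "k \<le> m"
  shows "8 / 7 * 2 ^ (m - k) \<le> 2 * (2::real) powr (real (Suc (2 * m)) / 2 - real (Suc k))"
proof -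
  have "8 / 7 \<le> sqrt (2::real)"
    by (rule real_le_rsqrt) (simp add: power2_eq_square)
  then have "8 / 7 * 2 ^ (m - k) \<le> (2::real) ^ (m - k) * sqrt 2"
    by simp
  also have "\<dots> = 2 powr (real (m - k) + 1 / 2)"
    by (simp add: powr_add powr_realpow powr_half_sqrt)
  also have "real (m - k) + 1 / 2 = (real (Suc (2 * m)) / 2 - real (Suc k)) + 1"
    using assms by (simp add: of_nat_diff)
  also have "(2::real) powr \<dots> = 2 * 2 powr (real (Suc (2 * m)) / 2 - real (Suc k))"
    by (simp add: powr_add del: of_nat_Suc)
  finally show ?thesis .
qed

lemma two_connected_touching_tvc_set:
  assumes "2 \<le> k"
  shows "two_connected (cube_verts (hamming_length k)) (touching_edges (hamming_length k) (tvc_set k))"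
  using assms le_hamming_length[of k] connected_tvc_set[of k] by (intro two_connected_cubeI) simp_all

lemma tvc_touching_tvc_set_le:
  assumes "1 \<le> k" and d: "d = hamming_length (Suc k)"
  shows "real (tvc (cube_verts d) (touching_edges d (tvc_set (Suc k))))
    \<le> 2 * (2 ^ (d - Suc k) + 2 powr (real d / 2 - real (Suc k)))"
proof -
  let ?a = "card (tvc_set k - hamming_code k)"
  have "tvc (cube_verts d) (touching_edges d (tvc_set (Suc k))) \<le> card (tvc_set (Suc k))"
    using tvc_set_subset[of "Suc k"] tvc_set_dominating[OF assms(1)] d
    by (intro tvc_touching_edges_le) (simp_all del: tvc_set.simps)
  also have "\<dots> \<le> 2 * 2 ^ (d - Suc k) + ?a"
    using card_tvc_set_Suc(1)[OF assms(1)] d by simp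
  finally have "real (tvc (cube_verts d) (touching_edges d (tvc_set (Suc k)))) \<le> real (2 * 2 ^ (d - Suc k) + ?a)"
    by (rule of_nat_mono)
  moreover have "7 * real ?a \<le> 8 * 2 ^ (hamming_length k - k)"
    using of_nat_mono[OF card_tvc_set_diff_hamming_code[OF assms(1)]] by simp
  moreover have "8 / 7 * 2 ^ (hamming_length k - k) \<le> 2 * (2::real) powr (real d / 2 - real (Suc k))"
    using eight_sevenths_le_powr[OF le_hamming_length[of k]] d by (simp add: hamming_length_Suc)
  ultimately show ?thesis
    unfolding distrib_left of_nat_add by simp
qed

theorem theorem4p4:
  fixes l d :: nat
  assumes "l \<ge> 2" and "d = 2 ^ l - 1"
  shows "\<exists>E. spanning_subgraph_of_cube d (cube_verts d) E \<and> two_connected (cube_verts d) E \<and>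
           real (tvc (cube_verts d) E) \<le> 2 * (2 ^ (d - l) + 2 powr (real d / 2 - real l))"
proof -
  obtain k where l: "l = Suc k" and k: "1 \<le> k"
    using assms(1) by (cases l) auto
  have d: "d = hamming_length l"
    using assms(2) by (simp add: hamming_length_def)
  let ?E = "touching_edges d (tvc_set l)"
  have "spanning_subgraph_of_cube d (cube_verts d) ?E"
    by (simp add: spanning_subgraph_of_cube_def touching_edges_def)
  moreover have "two_connected (cube_verts d) ?E"
    using two_connected_touching_tvc_set[OF assms(1)] d by simp
  moreover have "real (tvc (cube_verts d) ?E) \<le> 2 * (2 ^ (d - l) + 2 powr (real d / 2 - real l))"
    using tvc_touching_tvc_set_le[OF k] d l by simp
  ultimately show ?thesis
    by blast
qed

end
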